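(* Let $x=[x_1,\dots,x_N]\in S_N$ and let $(x_p,x_q,x_r)$, $p<q<r$, be a minimally chosen $[231]$-pattern in $x$. Let $x'$ be the permutation obtained from $x$ by exchanging the entries in positions $p$ and $q$, i.e. $x'=[x_1,\dots,x_{p-1},x_q,x_{p+1},\dots,x_{q-1},x_p,x_{q+1},\dots,x_N]$. Then $\phi(\pi_{x'})=\phi(\pi_x)$, and $(x'_p,x'_q,x'_r)$ is a left-minimal $[321]$-pattern in $x'$.
   Context: Permutations are in one-line notation and composed as functions. $H_0(S_N)$ is generated by $\pi_1,\dots,\pi_{N-1}$ with $\pi_i^2=\pi_i$, $\pi_i\pi_j=\pi_j\pi_i$ for $|i-j|\ge2$, $\pi_i\pi_{i+1}\pi_i=\pi_{i+1}\pi_i\pi_{i+1}$; $\pi_w=\pi_{i_1}\cdots\pi_{i_k}$ for a reduced word $w=s_{i_1}\cdots s_{i_k}$. $\phi$ is the quotient morphism from $H_0(S_N)$ to its quotient by the relations $\pi_i\pi_{i+1}\pi_i=\pi_i\pi_{i+1}$ ($1\le i\le N-2$), sending $\pi_i\mapsto\pi_i$ (this quotient is isomorphic to $\operatorname{NDPF}_N$). A $[231]$-pattern is a triple of positions $p<q<r$ with $x_r<x_p<x_q$; its width is $(r-p,q-p)$, and it is minimally chosen if its width is lexicographically minimal among all $[231]$-patterns of $x$. A $[321]$-pattern $(x_p,x_q,x_r)$ ($p<q<r$, $x_p>x_q>x_r$) is left minimal if $x_t<x_r$ for all $t$ with $p<t<q$ and $x_s>x_q$ for all $s$ with $q<s<r$.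 *)

theory Defs
  imports "HOL-Combinatorics.Combinatorics"
begin

text \<open>Permutations of {1..N} are functions x :: nat => nat with x permutes {1..N};
  one-line notation [x 1, ..., x N]. The simple transposition s_i swaps i and i+1.\<close>

definition simple_transp :: "nat \<Rightarrow> nat \<Rightarrow> nat" where
  "simple_transp i = Transposition.transpose i (Suc i)"

definition word_perm :: "nat list \<Rightarrow> (nat \<Rightarrow> nat)" where
  "word_perm w = foldr (\<lambda>i f. simple_transp i \<circ> f) w id"

definition valid_word :: "nat \<Rightarrow> nat list \<Rightarrow> bool" where
  "valid_word N w \<longleftrightarrow> (\<forall>i\<in>set w. 1 \<le> i \<and> i \<le> N - 1)"

definition reduced_word :: "nat \<Rightarrow> (nat \<Rightarrow> nat) \<Rightarrow> nat list \<Rightarrow> bool" where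
  "reduced_word N x w \<longleftrightarrow> valid_word N w \<and> word_perm w = x \<and>
     (\<forall>w'. valid_word N w' \<and> word_perm w' = x \<longrightarrow> length w \<le> length w')"

text \<open>Defining relations of H_0(S_N) together with the extra NDPF relations
  pi_i pi_(i+1) pi_i = pi_i pi_(i+1), as relations between words over {1..N-1}.\<close>
inductive ndpf_rel :: "nat \<Rightarrow> nat list \<Rightarrow> nat list \<Rightarrow> bool" for N where
  idem: "1 \<le> i \<Longrightarrow> i \<le> N - 1 \<Longrightarrow> ndpf_rel N [i, i] [i]"
| comm: "1 \<le> i \<Longrightarrow> i \<le> N - 1 \<Longrightarrow> 1 \<le> j \<Longrightarrow> j \<le> N - 1 \<Longrightarrow>
           i + 2 \<le> j \<or> j + 2 \<le> i \<Longrightarrow> ndpf_rel N [i, j] [j, i]"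
| braid: "1 \<le> i \<Longrightarrow> i + 1 \<le> N - 1 \<Longrightarrow> ndpf_rel N [i, Suc i, i] [Suc i, i, Suc i]"
| ndpf: "1 \<le> i \<Longrightarrow> i \<le> N - 2 \<Longrightarrow> ndpf_rel N [i, Suc i, i] [i, Suc i]"

definition ndpf_step :: "nat \<Rightarrow> nat list \<Rightarrow> nat list \<Rightarrow> bool" where
  "ndpf_step N u v \<longleftrightarrow> (\<exists>a b l r. u = a @ l @ b \<and> v = a @ r @ b \<and> ndpf_rel N l r)"

text \<open>Two words represent the same element of the quotient H_0(S_N)/(extra relations)
  (i.e. NDPF_N) iff they are related by the generated monoid congruence.\<close>
definition ndpf_eq :: "nat \<Rightarrow> nat list \<Rightarrow> nat list \<Rightarrow> bool" where
  "ndpf_eq N = equivclp (ndpf_step N)"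

text \<open>phi(pi_x) = phi(pi_y): the images of reduced words of x and y coincide.\<close>
definition phi_pi_eq :: "nat \<Rightarrow> (nat \<Rightarrow> nat) \<Rightarrow> (nat \<Rightarrow> nat) \<Rightarrow> bool" where
  "phi_pi_eq N x y \<longleftrightarrow> (\<forall>w w'. reduced_word N x w \<and> reduced_word N y w' \<longrightarrow> ndpf_eq N w w')"

definition is_231 :: "nat \<Rightarrow> (nat \<Rightarrow> nat) \<Rightarrow> nat \<Rightarrow> nat \<Rightarrow> nat \<Rightarrow> bool" where
  "is_231 N x p q r \<longleftrightarrow> 1 \<le> p \<and> p < q \<and> q < r \<and> r \<le> N \<and> x r < x p \<and> x p < x q"

definition min_231 :: "nat \<Rightarrow> (nat \<Rightarrow> nat) \<Rightarrow> nat \<Rightarrow> nat \<Rightarrow> nat \<Rightarrow> bool" where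
  "min_231 N x p q r \<longleftrightarrow> is_231 N x p q r \<and>
     (\<forall>p' q' r'. is_231 N x p' q' r' \<longrightarrow>
        r - p < r' - p' \<or> (r - p = r' - p' \<and> q - p \<le> q' - p'))"

definition left_min_321 :: "nat \<Rightarrow> (nat \<Rightarrow> nat) \<Rightarrow> nat \<Rightarrow> nat \<Rightarrow> nat \<Rightarrow> bool" where
  "left_min_321 N x p q r \<longleftrightarrow> 1 \<le> p \<and> p < q \<and> q < r \<and> r \<le> N \<and>
     x p > x q \<and> x q > x r \<and>
     (\<forall>t. p < t \<and> t < q \<longrightarrow> x t < x r) \<and>
     (\<forall>s. q < s \<and> s < r \<longrightarrow> x s > x q)"

end

theory Submission
  imports Defs
begin

text \<open>The reduced words of a permutation are the words whose length is its number of
  inversions, and by Matsumoto's theorem any two of them are related by braid and commutation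
  moves, which hold in \<open>NDPF\<^sub>N\<close>.  Minimality of the \<open>[231]\<close>-pattern forces
  \<open>x\<^sub>t < x\<^sub>r\<close> for \<open>p < t < q\<close> and \<open>x\<^sub>s > x\<^sub>p\<close> for \<open>q < s < r\<close>.  This already gives the
  left-minimal \<open>[321]\<close>-pattern, and it lets one choose reduced words of \<open>x\<close> and of \<open>x'\<close>
  that differ only by replacing a factor \<open>s\<^sub>i s\<^sub>i\<^sub>+\<^sub>1\<close> with \<open>s\<^sub>i s\<^sub>i\<^sub>+\<^sub>1 s\<^sub>i\<close>, which is exactly
  a defining relation of the quotient.\<close>

lemma simple_transp_apply:
  "simple_transp i t = (if t = i then Suc i else if t = Suc i then i else t)"
  by (simp add: simple_transp_def Transposition.transpose_def)

lemma simple_transp_simple_transp [simp]: "simple_transp i (simple_transp i t) = t"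
  by (simp add: simple_transp_def)

lemma simple_transp_comp_simple_transp [simp]: "simple_transp i \<circ> simple_transp i = id"
  by (simp add: simple_transp_def)

lemma comp_simple_transp_simple_transp [simp]: "y \<circ> simple_transp i \<circ> simple_transp i = y"
  by (simp add: fun_eq_iff)

lemma simple_transp_permutes: "1 \<le> i \<Longrightarrow> i < N \<Longrightarrow> simple_transp i permutes {1..N}"
  unfolding simple_transp_def by (rule permutes_swap_id) auto

lemma simple_transp_commute:
  "Suc i < j \<Longrightarrow> simple_transp i \<circ> simple_transp j = simple_transp j \<circ> simple_transp i"
  by (auto simp: fun_eq_iff simple_transp_apply)

lemma simple_transp_braid:
  "simple_transp i \<circ> simple_transp (Suc i) \<circ> simple_transp i
     = simple_transp (Suc i) \<circ> simple_transp i \<circ> simple_transp (Suc i)"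
  by (auto simp: fun_eq_iff simple_transp_apply)

lemma word_perm_Nil [simp]: "word_perm [] = id"
  by (simp add: word_perm_def)

lemma word_perm_Cons [simp]: "word_perm (i # w) = simple_transp i \<circ> word_perm w"
  by (simp add: word_perm_def)

lemma word_perm_append [simp]: "word_perm (u @ w) = word_perm u \<circ> word_perm w"
  by (induction u) (auto simp: comp_assoc)

lemma word_perm_rev_apply [simp]: "word_perm (rev w) (word_perm w t) = t"
  by (induction w arbitrary: t) auto

lemma comp_word_perm_word_perm_rev [simp]: "y \<circ> word_perm w \<circ> word_perm (rev w) = y"
  using word_perm_rev_apply[of "rev w"] by (simp add: fun_eq_iff)

lemma comp_word_perm_rev_word_perm [simp]: "y \<circ> word_perm (rev w) \<circ> word_perm w = y"
  using comp_word_perm_word_perm_rev[of y "rev w"] by simp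

lemma valid_word_Nil [simp]: "valid_word N []"
  by (simp add: valid_word_def)

lemma valid_word_Cons [simp]: "valid_word N (i # w) \<longleftrightarrow> 1 \<le> i \<and> i < N \<and> valid_word N w"
  by (auto simp: valid_word_def)

lemma valid_word_append [simp]: "valid_word N (u @ w) \<longleftrightarrow> valid_word N u \<and> valid_word N w"
  by (auto simp: valid_word_def)

lemma word_perm_permutes: "valid_word N w \<Longrightarrow> word_perm w permutes {1..N}"
proof (induction w)
  case (Cons i w)
  then have "simple_transp i \<circ> word_perm w permutes {1..N}"
    by (intro permutes_compose simple_transp_permutes) auto
  then show ?case by (simp only: word_perm_Cons)
qed simp

lemma simple_transp_comp_word_perm:
  "\<forall>j\<in>set w. Suc i < j \<Longrightarrow> simple_transp i \<circ> word_perm w = word_perm w \<circ> simple_transp i"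
  by (induction w) (simp_all, metis comp_assoc simple_transp_commute)

section \<open>Inversions and the length of a permutation\<close>

definition inversions :: "nat \<Rightarrow> (nat \<Rightarrow> nat) \<Rightarrow> (nat \<times> nat) set" where
  "inversions N y = {(a, b). 1 \<le> a \<and> a < b \<and> b \<le> N \<and> y b < y a}"

definition inv_count :: "nat \<Rightarrow> (nat \<Rightarrow> nat) \<Rightarrow> nat" where
  "inv_count N y = card (inversions N y)"

lemma finite_inversions: "finite (inversions N y)"
  by (rule finite_subset[of _ "{1..N} \<times> {1..N}"]) (auto simp: inversions_def)

lemma inv_count_id [simp]: "inv_count N id = 0"
proof -
  have "inversions N id = {}" by (auto simp: inversions_def)
  then show ?thesis by (simp add: inv_count_def)
qed

text \<open>Conjugation by \<open>s\<^sub>k\<close> matches the inversions of \<open>y\<close> and of \<open>y \<circ> s\<^sub>k\<close>,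
  except for the pair \<open>(k, k + 1)\<close>.\<close>

lemma inv_count_comp_ascent:
  assumes "1 \<le> k" "k < N" "y k < y (Suc k)"
  shows "inv_count N (y \<circ> simple_transp k) = Suc (inv_count N y)"
proof -
  let ?s = "simple_transp k"
  let ?g = "map_prod ?s ?s"
  have inj_g: "inj ?g"
    by (auto simp: inj_def simple_transp_apply split: if_splits)
  have conj: "(a, b) \<in> ?g ` inversions N y \<longleftrightarrow> (?s a, ?s b) \<in> inversions N y" for a b
    using image_eqI[of "(a, b)" ?g "(?s a, ?s b)"] by auto
  have mem: "(a, b) \<in> inversions N (y \<circ> ?s) \<longleftrightarrow>
      (a, b) = (k, Suc k) \<or> (?s a, ?s b) \<in> inversions N y" for a b
    using assms by (auto simp: inversions_def simple_transp_apply)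
  have "inversions N (y \<circ> ?s) = insert (k, Suc k) (?g ` inversions N y)"
    unfolding set_eq_iff by (simp add: conj mem)
  moreover have "(k, Suc k) \<notin> ?g ` inversions N y"
    unfolding conj by (simp add: inversions_def simple_transp_apply)
  ultimately show ?thesis
    unfolding inv_count_def
    by (simp add: finite_inversions card_image inj_on_subset[OF inj_g])
qed

lemma inv_count_comp_descent:
  assumes "1 \<le> k" "k < N" "y (Suc k) < y k"
  shows "Suc (inv_count N (y \<circ> simple_transp k)) = inv_count N y"
  using inv_count_comp_ascent[of k N "y \<circ> simple_transp k"] assms
  by (simp add: simple_transp_apply)

lemma inv_count_comp_le:
  assumes "inj y" "1 \<le> k" "k < N"
  shows "inv_count N (y \<circ> simple_transp k) \<le> Suc (inv_count N y)"
proof -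
  have "y k \<noteq> y (Suc k)" using assms(1) by (metis injD n_not_Suc_n)
  then consider "y k < y (Suc k)" | "y (Suc k) < y k" by linarith
  then show ?thesis
  proof cases
    case 1
    then show ?thesis using inv_count_comp_ascent[OF assms(2,3) 1] by linarith
  next
    case 2
    then show ?thesis using inv_count_comp_descent[OF assms(2,3) 2] by linarith
  qed
qed

lemma inv_count_le_length: "valid_word N w \<Longrightarrow> inv_count N (word_perm w) \<le> length w"
proof (induction w rule: rev_induct)
  case (snoc i w)
  then have "inj (word_perm w)" "1 \<le> i" "i < N"
    by (auto intro: permutes_inj word_perm_permutes)
  then have "inv_count N (word_perm w \<circ> simple_transp i) \<le> Suc (inv_count N (word_perm w))"
    by (rule inv_count_comp_le)
  moreover have "word_perm (w @ [i]) = word_perm w \<circ> simple_transp i"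
    by simp
  moreover have "inv_count N (word_perm w) \<le> length w"
    using snoc by simp
  ultimately show ?case
    by (metis Suc_le_mono le_trans length_append_singleton)
qed simp

lemma permutes_ascending_eq_id:
  assumes x: "x permutes {1..N}" and asc: "\<And>k. 1 \<le> k \<Longrightarrow> k < N \<Longrightarrow> x k < x (Suc k)"
  shows "x = id"
proof
  fix a
  have range: "1 \<le> x b \<and> x b \<le> N" if "1 \<le> b" "b \<le> N" for b
    using permutes_in_image[OF x, of b] that by simp
  have lower: "b \<le> x b" if "1 \<le> b" "b \<le> N" for b
    using that
  proof (induction b)
    case (Suc b)
    show ?case
    proof (cases "b = 0")
      case True
      then show ?thesis using range[of 1] Suc.prems by simp
    next
      case False
      then have "b \<le> x b" using Suc by simp
      also have "x b < x (Suc b)" using asc[of b] False Suc.prems by simp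
      finally show ?thesis by simp
    qed
  qed simp
  have upper: "x b \<le> b" if "1 \<le> b" "b \<le> N" for b
    using that
  proof (induction "N - b" arbitrary: b)
    case 0
    then show ?case using range[of b] by simp
  next
    case (Suc n)
    then have "b < N" by simp
    then have "x b < x (Suc b)" using asc Suc.prems by simp
    also have "x (Suc b) \<le> Suc b" using Suc \<open>b < N\<close> by simp
    finally show ?case by simp
  qed
  show "x a = id a"
  proof (cases "1 \<le> a \<and> a \<le> N")
    case True
    then show ?thesis using lower upper by (simp add: le_antisym)
  qed (use permutes_not_in[OF x] in simp)
qed

lemma permutes_descent_exists:
  assumes "x permutes {1..N}" "x \<noteq> id"
  obtains k where "1 \<le> k" "k < N" "x (Suc k) < x k"
proof -
  have "x k \<noteq> x (Suc k)" for k using permutes_inj[OF assms(1)] by (metis injD n_not_Suc_n)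
  then show ?thesis
    using that permutes_ascending_eq_id[OF assms(1)] assms(2) by (meson linorder_neqE_nat)
qed

lemma word_of_inv_count_length:
  "x permutes {1..N} \<Longrightarrow> \<exists>w. valid_word N w \<and> word_perm w = x \<and> length w = inv_count N x"
proof (induction "inv_count N x" arbitrary: x)
  case 0
  have "x = id"
  proof (rule ccontr)
    assume "x \<noteq> id"
    with 0 obtain k where "1 \<le> k" "k < N" "x (Suc k) < x k"
      using permutes_descent_exists by metis
    from inv_count_comp_descent[OF this] 0 show False by simp
  qed
  with 0 show ?case by (intro exI[of _ "[]"]) simp
next
  case (Suc n)
  then have "x \<noteq> id" by (metis inv_count_id nat.distinct(1))
  with Suc.prems obtain k where k: "1 \<le> k" "k < N" "x (Suc k) < x k"
    using permutes_descent_exists by metis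
  have "x \<circ> simple_transp k permutes {1..N}"
    using k Suc.prems by (intro permutes_compose simple_transp_permutes) auto
  moreover have "n = inv_count N (x \<circ> simple_transp k)"
    using inv_count_comp_descent[OF k] Suc.hyps(2) by simp
  ultimately obtain w where "valid_word N w" "word_perm w = x \<circ> simple_transp k"
      "length w = inv_count N (x \<circ> simple_transp k)"
    using Suc.hyps(1) by blast
  then show ?case
    using k inv_count_comp_descent[OF k] by (intro exI[of _ "w @ [k]"]) (simp add: comp_assoc)
qed

lemma reduced_word_permutes: "reduced_word N x w \<Longrightarrow> x permutes {1..N}"
  unfolding reduced_word_def using word_perm_permutes by blast

lemma reduced_word_iff:
  "reduced_word N x w \<longleftrightarrow> valid_word N w \<and> word_perm w = x \<and> length w = inv_count N x"
proof
  assume red: "reduced_word N x w"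
  then obtain u where "valid_word N u" "word_perm u = x" "length u = inv_count N x"
    using word_of_inv_count_length reduced_word_permutes by blast
  with red show "valid_word N w \<and> word_perm w = x \<and> length w = inv_count N x"
    unfolding reduced_word_def using inv_count_le_length by (metis le_antisym)
next
  assume "valid_word N w \<and> word_perm w = x \<and> length w = inv_count N x"
  then show "reduced_word N x w"
    unfolding reduced_word_def using inv_count_le_length by metis
qed

lemma reduced_word_exists: "x permutes {1..N} \<Longrightarrow> \<exists>w. reduced_word N x w"
  using word_of_inv_count_length reduced_word_iff by blast

lemma reduced_word_snoc_ascent:
  assumes "reduced_word N y w" "1 \<le> k" "k < N" "y k < y (Suc k)"
  shows "reduced_word N (y \<circ> simple_transp k) (w @ [k])"
  using assms inv_count_comp_ascent[OF assms(2-4)] by (simp add: reduced_word_iff)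

lemma reduced_word_snoc_descent:
  assumes "reduced_word N x (w @ [i])"
  shows "1 \<le> i \<and> i < N \<and> x (Suc i) < x i \<and> reduced_word N (x \<circ> simple_transp i) w"
proof -
  from assms have w: "valid_word N w" "1 \<le> i" "i < N" and x: "x = word_perm w \<circ> simple_transp i"
    and len: "Suc (length w) = inv_count N x"
    by (simp_all add: reduced_word_iff)
  then have xw: "x \<circ> simple_transp i = word_perm w" by simp
  have "inj x"
    using assms by (metis reduced_word_permutes permutes_inj)
  then have "x i \<noteq> x (Suc i)" by (metis injD n_not_Suc_n)
  moreover have "\<not> x i < x (Suc i)"
  proof
    assume "x i < x (Suc i)"
    from inv_count_comp_ascent[OF w(2,3) this] len inv_count_le_length[OF w(1)]
    show False unfolding xw by linarith
  qed
  ultimately have desc: "x (Suc i) < x i" by simp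
  have "Suc (inv_count N (word_perm w)) = inv_count N x"
    using inv_count_comp_descent[OF w(2,3) desc] by (simp only: xw)
  with w xw len desc show ?thesis
    by (simp add: reduced_word_iff)
qed

section \<open>The congruence generated by the defining relations\<close>

lemma ndpf_eq_refl [simp]: "ndpf_eq N u u"
  by (simp add: ndpf_eq_def)

lemma ndpf_eq_sym: "ndpf_eq N u v \<Longrightarrow> ndpf_eq N v u"
  unfolding ndpf_eq_def by (rule equivclp_sym)

lemma ndpf_eq_trans [trans]: "ndpf_eq N u v \<Longrightarrow> ndpf_eq N v w \<Longrightarrow> ndpf_eq N u w"
  unfolding ndpf_eq_def by (rule equivclp_trans)

lemma ndpf_eq_relI: "ndpf_rel N l r \<Longrightarrow> ndpf_eq N (u @ l @ w) (u @ r @ w)"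
  unfolding ndpf_eq_def ndpf_step_def by (rule r_into_equivclp) blast

lemma ndpf_eq_append_right: "ndpf_eq N u v \<Longrightarrow> ndpf_eq N (u @ w) (v @ w)"
  unfolding ndpf_eq_def
proof (induction rule: equivclp_induct)
  case (step v v')
  have "ndpf_step N (v @ w) (v' @ w) \<or> ndpf_step N (v' @ w) (v @ w)"
    using step(2) unfolding ndpf_step_def by (metis append.assoc)
  with step(3) show ?case by (blast intro: equivclp_into_equivclp)
qed simp

text \<open>Matsumoto's theorem: any two reduced words of a permutation are connected by braid and
  commutation moves, which are among the relations defining \<open>ndpf_eq\<close>.  The proof is by
  induction on the length; when the two words end in different letters \<open>i < j\<close>, both are
  rewritten to a common reduced word of \<open>x\<close> ending in the longest element of
  \<open>\<langle>s\<^sub>i, s\<^sub>j\<rangle>\<close>.\<close>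

lemma ndpf_eq_reduced_snoc_commuting:
  assumes IH: "\<And>y u v. inv_count N y < inv_count N x \<Longrightarrow>
      reduced_word N y u \<Longrightarrow> reduced_word N y v \<Longrightarrow> ndpf_eq N u v"
    and ij: "Suc i < j"
    and red: "reduced_word N x (a @ [i])" "reduced_word N x (b @ [j])"
  shows "ndpf_eq N (a @ [i]) (b @ [j])"
proof -
  let ?s = simple_transp
  from reduced_word_snoc_descent[OF red(1)] have i: "1 \<le> i" "i < N" "x (Suc i) < x i"
    and a: "reduced_word N (x \<circ> ?s i) a" by auto
  from reduced_word_snoc_descent[OF red(2)] have j: "1 \<le> j" "j < N" "x (Suc j) < x j"
    and b: "reduced_word N (x \<circ> ?s j) b" by auto
  have lt_i: "inv_count N (x \<circ> ?s i) < inv_count N x"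
    using inv_count_comp_descent[OF i] by simp
  have lt_j: "inv_count N (x \<circ> ?s j) < inv_count N x"
    using inv_count_comp_descent[OF j] by simp
  have "x \<circ> ?s i \<circ> ?s j permutes {1..N}"
    using reduced_word_permutes[OF red(1)] i j
    by (intro permutes_compose simple_transp_permutes) auto
  then obtain c where c: "reduced_word N (x \<circ> ?s i \<circ> ?s j) c"
    using reduced_word_exists by blast
  have ji: "x \<circ> ?s i \<circ> ?s j = x \<circ> ?s j \<circ> ?s i"
    using simple_transp_commute[OF ij] by (simp add: comp_assoc)
  have "reduced_word N (x \<circ> ?s i) (c @ [j])"
    using reduced_word_snoc_ascent[OF c j(1,2)] ij j by (simp add: simple_transp_apply)
  then have "ndpf_eq N a (c @ [j])"
    by (rule IH[OF lt_i a])
  then have "ndpf_eq N (a @ [i]) (c @ [j, i])"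
    using ndpf_eq_append_right by fastforce
  also have "ndpf_eq N (c @ [j, i]) (c @ [i, j])"
    using ndpf_eq_relI[OF ndpf_rel.comm[of j N i], of c "[]"] i j ij by simp
  also have "reduced_word N (x \<circ> ?s j) (c @ [i])"
    using reduced_word_snoc_ascent[OF c[unfolded ji] i(1,2)] ij i by (simp add: simple_transp_apply)
  then have "ndpf_eq N (c @ [i]) b"
    by (rule ndpf_eq_sym[OF IH[OF lt_j b]])
  then have "ndpf_eq N (c @ [i, j]) (b @ [j])"
    using ndpf_eq_append_right by fastforce
  finally show ?thesis .
qed

lemma ndpf_eq_reduced_snoc_braid:
  assumes IH: "\<And>y u v. inv_count N y < inv_count N x \<Longrightarrow>
      reduced_word N y u \<Longrightarrow> reduced_word N y v \<Longrightarrow> ndpf_eq N u v"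
    and red: "reduced_word N x (a @ [i])" "reduced_word N x (b @ [Suc i])"
  shows "ndpf_eq N (a @ [i]) (b @ [Suc i])"
proof -
  let ?s = simple_transp
  from reduced_word_snoc_descent[OF red(1)] have i: "1 \<le> i" "i < N" "x (Suc i) < x i"
    and a: "reduced_word N (x \<circ> ?s i) a" by auto
  from reduced_word_snoc_descent[OF red(2)] have j: "Suc i < N" "x (Suc (Suc i)) < x (Suc i)"
    and b: "reduced_word N (x \<circ> ?s (Suc i)) b" by auto
  have lt_i: "inv_count N (x \<circ> ?s i) < inv_count N x"
    using inv_count_comp_descent[OF i] by simp
  have lt_j: "inv_count N (x \<circ> ?s (Suc i)) < inv_count N x"
    using inv_count_comp_descent[of "Suc i" N x] j by simp
  have "x \<circ> ?s i \<circ> ?s (Suc i) \<circ> ?s i permutes {1..N}"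
    using reduced_word_permutes[OF red(1)] i j
    by (intro permutes_compose simple_transp_permutes) auto
  then obtain c where c: "reduced_word N (x \<circ> ?s i \<circ> ?s (Suc i) \<circ> ?s i) c"
    using reduced_word_exists by blast
  have braid: "x \<circ> ?s i \<circ> ?s (Suc i) \<circ> ?s i = x \<circ> ?s (Suc i) \<circ> ?s i \<circ> ?s (Suc i)"
    using simple_transp_braid[of i] by (simp add: comp_assoc)
  have desc3: "x (Suc (Suc i)) < x i"
    using i j by simp
  have "reduced_word N (x \<circ> ?s i \<circ> ?s (Suc i)) (c @ [i])"
    using reduced_word_snoc_ascent[OF c i(1,2)] i j by (simp add: simple_transp_apply)
  from reduced_word_snoc_ascent[OF this, of "Suc i"]
  have "reduced_word N (x \<circ> ?s i) (c @ [i, Suc i])"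
    using i j desc3 by (simp add: simple_transp_apply)
  then have "ndpf_eq N a (c @ [i, Suc i])"
    by (rule IH[OF lt_i a])
  then have "ndpf_eq N (a @ [i]) (c @ [i, Suc i, i] @ [])"
    using ndpf_eq_append_right by fastforce
  also have "ndpf_eq N (c @ [i, Suc i, i] @ []) (c @ [Suc i, i, Suc i] @ [])"
    using i j by (intro ndpf_eq_relI ndpf_rel.braid) auto
  also have "reduced_word N (x \<circ> ?s (Suc i) \<circ> ?s i) (c @ [Suc i])"
    using reduced_word_snoc_ascent[OF c[unfolded braid], of "Suc i"] i j
    by (simp add: simple_transp_apply)
  from reduced_word_snoc_ascent[OF this, of i]
  have "reduced_word N (x \<circ> ?s (Suc i)) (c @ [Suc i, i])"
    using i j desc3 by (simp add: simple_transp_apply)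
  then have "ndpf_eq N (c @ [Suc i, i]) b"
    by (rule ndpf_eq_sym[OF IH[OF lt_j b]])
  then have "ndpf_eq N (c @ [Suc i, i, Suc i] @ []) (b @ [Suc i])"
    using ndpf_eq_append_right by fastforce
  finally show ?thesis .
qed

theorem reduced_words_ndpf_eq:
  "reduced_word N x u \<Longrightarrow> reduced_word N x v \<Longrightarrow> ndpf_eq N u v"
proof (induction "inv_count N x" arbitrary: x u v rule: less_induct)
  case less
  show ?case
  proof (cases u rule: rev_exhaust)
    case Nil
    with less.prems show ?thesis by (simp add: reduced_word_iff)
  next
    case (snoc a i)
    with less.prems obtain b j where v: "v = b @ [j]"
      by (metis reduced_word_iff length_0_conv rev_exhaust)
    consider "i = j" | "Suc i < j" | "Suc j < i" | "j = Suc i" | "i = Suc j" by linarith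
    then show ?thesis
    proof cases
      case 1
      from less.prems snoc v 1 have "reduced_word N (x \<circ> simple_transp i) a"
        "reduced_word N (x \<circ> simple_transp i) b" "x (Suc i) < x i" "1 \<le> i" "i < N"
        using reduced_word_snoc_descent by blast+
      with less.hyps[of "x \<circ> simple_transp i"] inv_count_comp_descent[of i N x]
      have "ndpf_eq N a b" by simp
      with snoc v 1 show ?thesis by (simp add: ndpf_eq_append_right)
    next
      case 2
      with less snoc v show ?thesis by (metis ndpf_eq_reduced_snoc_commuting)
    next
      case 3
      with less snoc v show ?thesis by (metis ndpf_eq_sym ndpf_eq_reduced_snoc_commuting)
    next
      case 4
      with less snoc v show ?thesis by (metis ndpf_eq_reduced_snoc_braid)
    next
      case 5
      with less snoc v show ?thesis by (metis ndpf_eq_sym ndpf_eq_reduced_snoc_braid)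
    qed
  qed
qed

lemma phi_pi_eq_of_ndpf_reduced_words:
  assumes "reduced_word N x' (u @ [i, Suc i, i] @ w)" "reduced_word N x (u @ [i, Suc i] @ w)"
  shows "phi_pi_eq N x' x"
  unfolding phi_pi_eq_def
proof (intro allI impI, elim conjE)
  fix v v' assume red: "reduced_word N x' v" "reduced_word N x v'"
  have i: "1 \<le> i" "i \<le> N - 2"
    using assms(2) by (auto simp: reduced_word_def)
  have "ndpf_eq N v (u @ [i, Suc i, i] @ w)"
    by (rule reduced_words_ndpf_eq[OF red(1) assms(1)])
  also have "ndpf_eq N (u @ [i, Suc i, i] @ w) (u @ [i, Suc i] @ w)"
    by (rule ndpf_eq_relI[OF ndpf_rel.ndpf[OF i]])
  also have "ndpf_eq N (u @ [i, Suc i] @ w) v'"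
    by (rule reduced_words_ndpf_eq[OF assms(2) red(2)])
  finally show "ndpf_eq N v v'" .
qed

section \<open>Moving one entry across a block\<close>

lemma comp_word_perm_upt_apply:
  "a \<le> c \<Longrightarrow>
    (y \<circ> word_perm [a..<c]) t = (if t = c then y a else if a \<le> t \<and> t < c then y (Suc t) else y t)"
proof (induction c arbitrary: t rule: dec_induct)
  case (step n)
  then have "(y \<circ> word_perm [a..<Suc n]) t = (y \<circ> word_perm [a..<n]) (simple_transp n t)"
    by simp
  with step show ?case
    by (simp add: simple_transp_apply)
qed simp

lemma comp_word_perm_rev_upt_apply:
  "a \<le> c \<Longrightarrow>
    (y \<circ> word_perm (rev [a..<c])) t = (if t = a then y c else if a < t \<and> t \<le> c then y (t - 1) else y t)"
proof (induction c arbitrary: y rule: dec_induct)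
  case (step n)
  have "(y \<circ> word_perm (rev [a..<Suc n])) t = (y \<circ> simple_transp n \<circ> word_perm (rev [a..<n])) t"
    using step.hyps by simp
  also have "\<dots> = (if t = a then (y \<circ> simple_transp n) n
      else if a < t \<and> t \<le> n then (y \<circ> simple_transp n) (t - 1) else (y \<circ> simple_transp n) t)"
    by (rule step.IH)
  also have "\<dots> = (if t = a then y (Suc n) else if a < t \<and> t \<le> Suc n then y (t - 1) else y t)"
    using step.hyps by (auto simp: simple_transp_apply)
  finally show ?case .
qed simp

lemma reduced_word_append_upt:
  assumes "reduced_word N y w" "1 \<le> a" "a \<le> c" "c \<le> N"
    and larger: "\<And>t. a < t \<Longrightarrow> t \<le> c \<Longrightarrow> y a < y t"
  shows "reduced_word N (y \<circ> word_perm [a..<c]) (w @ [a..<c])"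
  using assms(3)
proof (induction c rule: dec_induct)
  case (step n)
  have "(y \<circ> word_perm [a..<n]) n = y a" "(y \<circ> word_perm [a..<n]) (Suc n) = y (Suc n)"
    using step.hyps by (simp_all add: comp_word_perm_upt_apply del: comp_apply)
  then have asc: "(y \<circ> word_perm [a..<n]) n < (y \<circ> word_perm [a..<n]) (Suc n)"
    using step.hyps larger by simp
  have "reduced_word N (y \<circ> word_perm [a..<n] \<circ> simple_transp n) ((w @ [a..<n]) @ [n])"
    by (rule reduced_word_snoc_ascent[OF step.IH _ _ asc]) (use step.hyps assms(2,4) in linarith)+
  moreover have "y \<circ> word_perm [a..<n] \<circ> simple_transp n = y \<circ> word_perm [a..<Suc n]"
    using step.hyps by (simp add: comp_assoc)
  moreover have "(w @ [a..<n]) @ [n] = w @ [a..<Suc n]"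
    using step.hyps by simp
  ultimately show ?case by metis
qed (use assms(1) in simp)

lemma reduced_word_append_rev_upt:
  assumes "a \<le> c" "reduced_word N y w" "1 \<le> a" "c \<le> N"
    and smaller: "\<And>t. a \<le> t \<Longrightarrow> t < c \<Longrightarrow> y t < y c"
  shows "reduced_word N (y \<circ> word_perm (rev [a..<c])) (w @ rev [a..<c])"
  using assms
proof (induction c arbitrary: y w rule: dec_induct)
  case (step n)
  have red: "reduced_word N (y \<circ> simple_transp n) (w @ [n])"
    using step by (intro reduced_word_snoc_ascent) auto
  have smaller': "(y \<circ> simple_transp n) t < (y \<circ> simple_transp n) n" if "a \<le> t" "t < n" for t
    using step that by (simp add: simple_transp_apply)
  have "reduced_word N (y \<circ> simple_transp n \<circ> word_perm (rev [a..<n])) ((w @ [n]) @ rev [a..<n])"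
    by (rule step.IH[OF red _ _ smaller']) (use step.prems in auto)
  moreover have "y \<circ> simple_transp n \<circ> word_perm (rev [a..<n]) = y \<circ> word_perm (rev [a..<Suc n])"
    using step.hyps by (simp add: comp_assoc)
  moreover have "(w @ [n]) @ rev [a..<n] = w @ rev [a..<Suc n]"
    using step.hyps by simp
  ultimately show ?case by metis
qed simp

lemma transpose_comp_word_perm_upt:
  "a \<le> i \<Longrightarrow>
    Transposition.transpose a (Suc i) \<circ> word_perm [a..<i] = word_perm [a..<i] \<circ> simple_transp i"
proof (induction a rule: inc_induct)
  case (step a)
  let ?\<tau> = "\<lambda>a. Transposition.transpose a (Suc i)"
  have swap: "?\<tau> a \<circ> simple_transp a = simple_transp a \<circ> ?\<tau> (Suc a)"
    using step.hyps by (simp add: fun_eq_iff simple_transp_apply Transposition.transpose_def)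
  have "?\<tau> a \<circ> word_perm [a..<i] = (?\<tau> a \<circ> simple_transp a) \<circ> word_perm [Suc a..<i]"
    using step.hyps by (simp add: upt_conv_Cons comp_assoc)
  also have "\<dots> = simple_transp a \<circ> (?\<tau> (Suc a) \<circ> word_perm [Suc a..<i])"
    by (simp only: swap comp_assoc)
  also have "\<dots> = simple_transp a \<circ> (word_perm [Suc a..<i] \<circ> simple_transp i)"
    by (simp only: step.IH)
  also have "\<dots> = word_perm [a..<i] \<circ> simple_transp i"
    using step.hyps by (simp add: upt_conv_Cons comp_assoc)
  finally show ?case .
qed (simp add: simple_transp_def)

section \<open>Swapping the first two entries of a minimal \<open>[231]\<close>-pattern\<close>

text \<open>In the construction below, \<open>z\<close> moves \<open>x\<^sub>p\<close> to position \<open>q - 1\<close> and \<open>v\<close> then moves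
  \<open>x\<^sub>r\<close> to position \<open>q + 1\<close>, so that \<open>v\<close> reads \<open>x\<^sub>p x\<^sub>q x\<^sub>r\<close> in positions \<open>q - 1, q, q + 1\<close>.
  Undoing this with ascents exhibits reduced words \<open>c (q-1) q R (rev L)\<close> of \<open>x\<close> and
  \<open>c (q-1) q (q-1) R (rev L)\<close> of \<open>x \<circ> (p q)\<close>, which differ by one NDPF relation.\<close>

lemma phi_pi_eq_comp_transpose:
  assumes x: "x permutes {1..N}" and pqr: "1 \<le> p" "p < q" "q < r" "r \<le> N" "x r < x p" "x p < x q"
    and left: "\<And>t. p < t \<Longrightarrow> t < q \<Longrightarrow> x t < x p"
    and right: "\<And>t. q < t \<Longrightarrow> t < r \<Longrightarrow> x r < x t"
  shows "phi_pi_eq N (x \<circ> Transposition.transpose p q) x"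
proof -
  let ?s = simple_transp
  obtain i where q: "q = Suc i" using pqr by (cases q) auto
  define L where "L = [p..<i]"
  define R where "R = [Suc q..<r]"
  define z where "z = x \<circ> word_perm L"
  define v where "v = z \<circ> word_perm (rev R)"
  have z_apply: "z t = (if t = i then x p else if p \<le> t \<and> t < i then x (Suc t) else x t)" for t
    using pqr q by (simp add: z_def L_def comp_word_perm_upt_apply del: comp_apply)
  have v_apply: "v t = (if t = Suc q then z r else if Suc q < t \<and> t \<le> r then z (t - 1) else z t)" for t
    using pqr by (simp add: v_def R_def comp_word_perm_rev_upt_apply del: comp_apply)
  have v_iq: "v i = x p" "v q = x q" "v (Suc q) = x r"
    using pqr q by (simp_all add: v_apply z_apply)
  have "valid_word N L" "valid_word N (rev R)"
    using pqr q by (auto simp: L_def R_def valid_word_def)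
  then have "v \<circ> ?s q \<circ> ?s i permutes {1..N}"
    unfolding v_def z_def using x pqr q
    by (intro permutes_compose simple_transp_permutes word_perm_permutes) auto
  then obtain c where c: "reduced_word N (v \<circ> ?s q \<circ> ?s i) c"
    using reduced_word_exists by blast
  from reduced_word_snoc_ascent[OF c, of i] have "reduced_word N (v \<circ> ?s q) (c @ [i])"
    using pqr q v_iq by (simp add: simple_transp_apply)
  from reduced_word_snoc_ascent[OF this, of q] have v_red: "reduced_word N v (c @ [i, q])"
    using pqr q v_iq by (simp add: simple_transp_apply)
  from reduced_word_snoc_ascent[OF this, of i] have v'_red: "reduced_word N (v \<circ> ?s i) (c @ [i, q, i])"
    using pqr q v_iq by (simp add: simple_transp_apply)
  have R_ascents: "(v \<circ> ?s i) (Suc q) < (v \<circ> ?s i) t" "v (Suc q) < v t" if "Suc q < t" "t \<le> r" for t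
    using that q right[of "t - 1"] by (auto simp: simple_transp_apply v_apply z_apply)
  have L_ascents: "z t < z i" "(z \<circ> ?s i) t < (z \<circ> ?s i) i" if "p \<le> t" "t < i" for t
    using that q pqr left[of "Suc t"] by (simp_all add: simple_transp_apply z_apply)
  have "reduced_word N (v \<circ> word_perm R) ((c @ [i, q]) @ R)"
    unfolding R_def using pqr by (intro reduced_word_append_upt v_red R_ascents) auto
  then have "reduced_word N (z \<circ> word_perm (rev L)) ((c @ [i, q] @ R) @ rev L)"
    unfolding L_def using pqr q
    by (intro reduced_word_append_rev_upt L_ascents) (auto simp: v_def)
  then have x_red: "reduced_word N x (c @ [i, Suc i] @ R @ rev L)"
    using q by (simp add: z_def)
  have "reduced_word N (v \<circ> ?s i \<circ> word_perm R) ((c @ [i, q, i]) @ R)"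
    unfolding R_def using pqr by (intro reduced_word_append_upt v'_red R_ascents) auto
  moreover have "v \<circ> ?s i \<circ> word_perm R = v \<circ> word_perm R \<circ> ?s i"
    using simple_transp_comp_word_perm[of R i] q by (simp add: R_def comp_assoc)
  then have "v \<circ> ?s i \<circ> word_perm R = z \<circ> ?s i"
    by (simp add: v_def)
  ultimately have "reduced_word N (z \<circ> ?s i \<circ> word_perm (rev L)) ((c @ [i, q, i] @ R) @ rev L)"
    unfolding L_def using pqr q by (intro reduced_word_append_rev_upt L_ascents) auto
  moreover have "z \<circ> ?s i = x \<circ> Transposition.transpose p q \<circ> word_perm L"
    using transpose_comp_word_perm_upt[of p i] pqr q by (simp add: z_def L_def comp_assoc)
  then have "z \<circ> ?s i \<circ> word_perm (rev L) = x \<circ> Transposition.transpose p q"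
    by simp
  ultimately have "reduced_word N (x \<circ> Transposition.transpose p q) (c @ [i, Suc i, i] @ R @ rev L)"
    using q by simp
  then show ?thesis
    using x_red by (rule phi_pi_eq_of_ndpf_reduced_words)
qed

lemma min_231_inner_left:
  assumes "inj x" "min_231 N x p q r" "p < t" "t < q"
  shows "x t < x r"
proof (rule ccontr)
  from assms(2) have pat: "is_231 N x p q r"
    and minimal: "\<And>p' q' r'. is_231 N x p' q' r' \<Longrightarrow>
      r - p < r' - p' \<or> (r - p = r' - p' \<and> q - p \<le> q' - p')"
    by (auto simp: min_231_def)
  assume "\<not> x t < x r"
  moreover have "t \<noteq> r" "t \<noteq> q"
    using assms(4) pat by (auto simp: is_231_def)
  then have "x t \<noteq> x r" "x t \<noteq> x q"
    using assms(1) by (simp_all add: inj_eq)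
  ultimately consider "x r < x t" "x t < x q" | "x q < x t"
    by (meson linorder_neqE_nat)
  then show False
  proof cases
    case 1
    then have "is_231 N x t q r" using pat assms(3,4) by (simp add: is_231_def)
    from minimal[OF this] show False using assms(3,4) pat by (auto simp: is_231_def)
  next
    case 2
    then have "is_231 N x p t r" using pat assms(3,4) by (simp add: is_231_def)
    from minimal[OF this] show False using assms(3,4) pat by (auto simp: is_231_def)
  qed
qed

lemma min_231_inner_right:
  assumes "inj x" "min_231 N x p q r" "q < t" "t < r"
  shows "x p < x t"
proof (rule ccontr)
  from assms(2) have pat: "is_231 N x p q r"
    and minimal: "\<And>p' q' r'. is_231 N x p' q' r' \<Longrightarrow>
      r - p < r' - p' \<or> (r - p = r' - p' \<and> q - p \<le> q' - p')"
    by (auto simp: min_231_def)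
  assume "\<not> x p < x t"
  moreover have "x t \<noteq> x p"
    using assms(1,3) pat by (auto simp: is_231_def inj_eq)
  ultimately have "is_231 N x p q t"
    using pat assms(3,4) by (auto simp: is_231_def)
  from minimal[OF this] show False using assms(3,4) pat by (auto simp: is_231_def)
qed

lemma left_min_321_comp_transpose:
  assumes "inj x" "min_231 N x p q r"
  shows "left_min_321 N (x \<circ> Transposition.transpose p q) p q r"
proof -
  have pat: "1 \<le> p" "p < q" "q < r" "r \<le> N" "x r < x p" "x p < x q"
    using assms(2) by (simp_all add: min_231_def is_231_def)
  have "(x \<circ> Transposition.transpose p q) t < x r" if "p < t" "t < q" for t
    using that min_231_inner_left[OF assms that] by simp
  moreover have "(x \<circ> Transposition.transpose p q) t > x p" if "q < t" "t < r" for t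
    using that pat min_231_inner_right[OF assms that] by simp
  ultimately show ?thesis
    using pat by (simp add: left_min_321_def)
qed

theorem mainTheorem12:
  fixes N p q r :: nat and x :: "nat \<Rightarrow> nat"
  assumes "x permutes {1..N}"
    and "min_231 N x p q r"
  shows "phi_pi_eq N (x \<circ> Transposition.transpose p q) x
       \<and> left_min_321 N (x \<circ> Transposition.transpose p q) p q r"
proof
  have inj: "inj x"
    using assms(1) by (rule permutes_inj)
  have pqr: "1 \<le> p" "p < q" "q < r" "r \<le> N" "x r < x p" "x p < x q"
    using assms(2) by (simp_all add: min_231_def is_231_def)
  show "phi_pi_eq N (x \<circ> Transposition.transpose p q) x"
  proof (rule phi_pi_eq_comp_transpose[OF assms(1) pqr])
    show "x t < x p" if "p < t" "t < q" for t
      using min_231_inner_left[OF inj assms(2) that] pqr(5) by simp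
    show "x r < x t" if "q < t" "t < r" for t
      using min_231_inner_right[OF inj assms(2) that] pqr(5) by simp
  qed
  show "left_min_321 N (x \<circ> Transposition.transpose p q) p q r"
    using left_min_321_comp_transpose[OF inj assms(2)] .
qed

end
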